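(* Let $X$ be a real-valued random variable with $E(|X|)<\infty$, let $(X_i)_{i\ge1}$ be IID with the law of $X$, let $N$ be a random variable with values in $\{1,2,3,\dots\}$ independent of $(X_i)$, and put $S_N=\sum_{k=1}^N X_k$. If $\mathbb{I}(X)\le \mathbb{I}(N)$, then $\mathbb{I}(S_N)=\mathbb{I}(X)$. (No assumption on the sign of $E(X)$ is made.)
   Context: For a real random variable $Y$, the moment index is $\mathbb{I}(Y):=\sup\{s\ge 0: E((Y^+)^s)<\infty\}\in[0,\infty]$, where $y^+=\max(0,y)$. *)

theory Defs
  imports "HOL-Probability.Probability"
begin

text \<open>For s = 0 the integrand is irrelevant: 0 always belongs to the set anyway on a probability space.\<close>
definition moment_index :: "'a measure \<Rightarrow> ('a \<Rightarrow> real) \<Rightarrow> ereal" where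
  "moment_index M Y =
     Sup (ereal ` {s::real. 0 \<le> s \<and>
        (\<integral>\<^sup>+ x. ennreal ((max 0 (Y x)) powr s) \<partial>M) < \<infinity>})"

end

theory Submission
  imports Defs
begin

(* Write m(Y,s) = E((Y^+)^s), so that I(Y) = sup {s >= 0. m(Y,s) < infinity}.
   Both inequalities between I(S) and I(X) are proved exponent by exponent.

   Upper bound I(S) <= I(X): choose n with P(N = n) > 0 and c with P(X >= -c) > 0.
   On the event {N = n, X_2 >= -c, ..., X_n >= -c} we have S >= X_1 - n c, and by
   independence the expectation of (X_1 - n c)^+^s over this event factors as
   P(N = n) * m(X - n c, s) * P(X >= -c)^(n-1).  Hence m(S,s) < infinity forces
   m(X - n c, s) < infinity, and then m(X,s) < infinity.

   Lower bound I(X) <= I(S): let s < I(X) <= I(N) and t = max s 1; then m(X,t) is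
   finite (for t = 1 this is integrability).  Jensen's inequality for the convex
   map y -> y^t gives S^+^s <= 2^t (N^s + N^(s-1) * sum_{k<=N} X_k^+^t), and a Wald
   type identity E(h(N) sum_{k<=N} g(X_k)) = E(h(N) N) E(g(X)) turns the right-hand
   side into 2^t (E N^s + E N^s * m(X,t)) < infinity. *)

section \<open>Elementary inequalities\<close>

lemma one_plus_powr_le:
  fixes y t :: real
  assumes "0 \<le> y" "1 \<le> t"
  shows "(1 + y) powr t \<le> 2 powr t * (1 + y powr t)"
proof (cases "y \<le> 1")
  case True
  have "(1 + y) powr t \<le> 2 powr t" using assms True by (intro powr_mono2) auto
  also have "\<dots> \<le> 2 powr t * (1 + y powr t)" by simp
  finally show ?thesis .
next
  case False
  have "(1 + y) powr t \<le> (2 * y) powr t" using assms False by (intro powr_mono2) auto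
  also have "\<dots> = 2 powr t * y powr t" using assms by (simp add: powr_mult)
  also have "\<dots> \<le> 2 powr t * (1 + y powr t)" by simp
  finally show ?thesis .
qed

text \<open>Power of a sum of \<open>n\<close> nonnegative terms, for an exponent \<open>s \<le> t\<close> with \<open>1 \<le> t\<close>:
  the mean \<open>a\<close> of the terms satisfies \<open>a^s \<le> (1+a)^t\<close>, and Jensen's inequality for the
  convex function \<open>y \<mapsto> y^t\<close> bounds \<open>(1+a)^t\<close> by the mean of the \<open>(1+y_k)^t\<close>.\<close>
lemma powr_sum_le:
  fixes y :: "nat \<Rightarrow> real" and n :: nat and s t :: real
  assumes n: "n \<ge> 1" and y: "\<And>k. y k \<ge> 0" and s: "0 \<le> s" "s \<le> t" and t: "1 \<le> t"
  shows "(\<Sum>k=1..n. y k) powr s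
           \<le> 2 powr t * (real n powr s + real n powr (s - 1) * (\<Sum>k=1..n. y k powr t))"
proof -
  define a where "a = (\<Sum>k=1..n. y k) / n"
  have npos: "real n > 0" using n by simp
  have a0: "a \<ge> 0" unfolding a_def by (intro divide_nonneg_nonneg sum_nonneg) (auto simp: y)
  have sum_eq: "(\<Sum>k=1..n. y k) powr s = real n powr s * a powr s"
    using npos a0 by (simp add: a_def powr_mult[symmetric])
  have "a powr s \<le> (1 + a) powr s" using a0 s by (intro powr_mono2) auto
  also have "\<dots> \<le> (1 + a) powr t" using a0 s by (intro powr_mono) auto
  also have "1 + a = (\<Sum>k\<in>{1..n}. (1 / real n) *\<^sub>R (1 + y k))"
    using npos by (simp add: a_def sum.distrib sum_divide_distrib[symmetric] add_divide_distrib)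
  also have "(\<Sum>k\<in>{1..n}. (1 / real n) *\<^sub>R (1 + y k)) powr t
               \<le> (\<Sum>k\<in>{1..n}. (1 / real n) * (1 + y k) powr t)"
    using n y by (intro convex_on_sum[OF _ _ powr_convex[OF t]]) (auto simp: add_pos_nonneg)
  also have "\<dots> \<le> (\<Sum>k\<in>{1..n}. (1 / real n) * (2 powr t * (1 + y k powr t)))"
    using y t by (intro sum_mono mult_left_mono one_plus_powr_le) auto
  also have "\<dots> = (2 powr t / real n) * (\<Sum>k\<in>{1..n}. 1 + y k powr t)"
    by (simp add: sum_distrib_left)
  also have "\<dots> = 2 powr t * (1 + (\<Sum>k=1..n. y k powr t) / real n)"
    using npos by (simp add: sum.distrib field_simps)
  finally have "a powr s \<le> 2 powr t * (1 + (\<Sum>k=1..n. y k powr t) / real n)" .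
  then have "(\<Sum>k=1..n. y k) powr s \<le> real n powr s * (2 powr t * (1 + (\<Sum>k=1..n. y k powr t) / real n))"
    unfolding sum_eq by (simp add: mult_left_mono)
  also have "\<dots> = 2 powr t * (real n powr s + real n powr s / real n * (\<Sum>k=1..n. y k powr t))"
    by (simp add: field_simps)
  also have "real n powr s / real n = real n powr (s - 1)"
    using npos by (simp add: powr_diff)
  finally show ?thesis .
qed

text \<open>The same bound for the positive part of an arbitrary real sum, via \<open>(\<Sum> x_k)^+ \<le> \<Sum> x_k^+\<close>.\<close>
lemma pos_part_sum_powr_le:
  fixes x :: "nat \<Rightarrow> real" and n :: nat and s t :: real
  assumes "n \<ge> 1" "0 \<le> s" "s \<le> t" "1 \<le> t"
  shows "max 0 (\<Sum>k=1..n. x k) powr s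
           \<le> 2 powr t * (real n powr s + real n powr (s - 1) * (\<Sum>k=1..n. max 0 (x k) powr t))"
proof -
  have "max 0 (\<Sum>k=1..n. x k) \<le> (\<Sum>k=1..n. max 0 (x k))"
    by (intro max.boundedI sum_nonneg sum_mono) auto
  then have "max 0 (\<Sum>k=1..n. x k) powr s \<le> (\<Sum>k=1..n. max 0 (x k)) powr s"
    using assms by (intro powr_mono2) auto
  also have "\<dots> \<le> 2 powr t * (real n powr s + real n powr (s - 1) * (\<Sum>k=1..n. max 0 (x k) powr t))"
    using assms by (intro powr_sum_le) auto
  finally show ?thesis .
qed

lemma powr_le_one_plus_powr:
  fixes y s s' :: real
  assumes "0 \<le> y" "0 \<le> s" "s \<le> s'"
  shows "y powr s \<le> 1 + y powr s'"
proof (cases "y \<le> 1")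
  case True
  then have "y powr s \<le> 1 powr s" using assms by (intro powr_mono2) auto
  then show ?thesis by (simp add: add_increasing2)
next
  case False
  then have "y powr s \<le> y powr s'" using assms by (intro powr_mono) auto
  then show ?thesis by simp
qed

lemma pos_part_powr_shift_le:
  fixes x C s :: real
  assumes "0 \<le> C" "0 \<le> s"
  shows "max 0 x powr s \<le> (2 * C) powr s + 2 powr s * max 0 (x - C) powr s"
proof (cases "x \<le> 2 * C")
  case True
  have "max 0 x powr s \<le> (2 * C) powr s" using True assms by (intro powr_mono2) auto
  then show ?thesis by (simp add: add_increasing2)
next
  case False
  have "max 0 x powr s \<le> (2 * max 0 (x - C)) powr s" using False assms by (intro powr_mono2) auto
  also have "\<dots> = 2 powr s * max 0 (x - C) powr s" by (simp add: powr_mult)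
  finally show ?thesis by (simp add: add_increasing)
qed

lemma sum_ge_first_minus:
  fixes x :: "nat \<Rightarrow> real" and c :: real
  assumes n: "n \<ge> 1" and c: "0 \<le> c" and lb: "\<And>k. k \<in> {2..n} \<Longrightarrow> - c \<le> x k"
  shows "x 1 - real n * c \<le> (\<Sum>k=1..n. x k)"
proof -
  have "(\<Sum>k=1..n. x k) = x 1 + (\<Sum>k=2..n. x k)"
    using n by (simp add: sum.atLeast_Suc_atMost numeral_2_eq_2)
  moreover have "(\<Sum>k=2..n. - c) \<le> (\<Sum>k=2..n. x k)" using lb by (intro sum_mono) auto
  moreover have "- (real n * c) \<le> (\<Sum>k=2..n. - c)"
    using n c by (simp add: mult_right_mono)
  ultimately show ?thesis by linarith
qed

section \<open>Positive-part moments and the moment index\<close>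

definition pos_moment :: "'a measure \<Rightarrow> ('a \<Rightarrow> real) \<Rightarrow> real \<Rightarrow> ennreal" where
  "pos_moment M Y s = (\<integral>\<^sup>+x. ennreal (max 0 (Y x) powr s) \<partial>M)"

lemma moment_index_pos_moment:
  "moment_index M Y = Sup (ereal ` {s. 0 \<le> s \<and> pos_moment M Y s < \<infinity>})"
  by (simp add: moment_index_def pos_moment_def)

lemma ereal_le_moment_index:
  "0 \<le> s \<Longrightarrow> pos_moment M Y s < \<infinity> \<Longrightarrow> ereal s \<le> moment_index M Y"
  unfolding moment_index_pos_moment by (intro Sup_upper) auto

text \<open>On a probability space every zeroth moment is finite, so the moment index is \<open>\<ge> 0\<close>.\<close>
lemma (in prob_space) moment_index_nonneg: "0 \<le> moment_index M Y"
proof -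
  have "pos_moment M Y 0 \<le> (\<integral>\<^sup>+x. 1 \<partial>M)"
    unfolding pos_moment_def by (intro nn_integral_mono) (auto simp: powr_def)
  then have "pos_moment M Y 0 < \<infinity>" using emeasure_space_1 by (simp add: order_le_less_trans)
  then show ?thesis using ereal_le_moment_index[of 0] by (simp add: zero_ereal_def)
qed

lemma (in prob_space) pos_moment_finite_mono:
  assumes [measurable]: "Y \<in> borel_measurable M" and s: "0 \<le> s" "s \<le> s'"
    and fin: "pos_moment M Y s' < \<infinity>"
  shows "pos_moment M Y s < \<infinity>"
proof -
  have "pos_moment M Y s \<le> (\<integral>\<^sup>+x. 1 + ennreal (max 0 (Y x) powr s') \<partial>M)"
    unfolding pos_moment_def
  proof (intro nn_integral_mono)
    fix x
    have "max 0 (Y x) powr s \<le> 1 + max 0 (Y x) powr s'" using s by (intro powr_le_one_plus_powr) auto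
    then show "ennreal (max 0 (Y x) powr s) \<le> 1 + ennreal (max 0 (Y x) powr s')"
      by (metis ennreal_leI ennreal_plus ennreal_1 zero_le_one powr_ge_zero)
  qed
  also have "\<dots> = 1 + pos_moment M Y s'"
    by (subst nn_integral_add) (auto simp: pos_moment_def emeasure_space_1)
  also have "\<dots> < \<infinity>" using fin by simp
  finally show ?thesis .
qed

lemma (in prob_space) pos_moment_finite_below:
  assumes "Y \<in> borel_measurable M" and "0 \<le> s" and "ereal s < moment_index M Y"
  shows "pos_moment M Y s < \<infinity>"
proof -
  from assms(3) obtain s' where "pos_moment M Y s' < \<infinity>" "s < s'"
    unfolding moment_index_pos_moment less_Sup_iff by auto
  then show ?thesis using pos_moment_finite_mono[OF assms(1,2), of s'] by simp
qed

text \<open>For an integrable variable the first moment is finite, so below the moment index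
  the moment of order \<open>max s 1\<close> is finite as well.\<close>
lemma (in prob_space) pos_moment_finite_max_one:
  assumes "Y \<in> borel_measurable M" and "integrable M Y"
    and "0 \<le> s" and "ereal s < moment_index M Y"
  shows "pos_moment M Y (max s 1) < \<infinity>"
proof (cases "1 \<le> s")
  case True
  then show ?thesis using pos_moment_finite_below[OF assms(1,3,4)] by (simp add: max_def)
next
  case False
  have "pos_moment M Y (max s 1) \<le> (\<integral>\<^sup>+x. ennreal (norm (Y x)) \<partial>M)"
    using False unfolding pos_moment_def by (intro nn_integral_mono ennreal_leI) auto
  also have "\<dots> < \<infinity>" using assms(2) by (simp add: integrable_iff_bounded)
  finally show ?thesis .
qed

lemma (in prob_space) pos_moment_finite_shift:
  assumes [measurable]: "Y \<in> borel_measurable M" and C: "0 \<le> C" and s: "0 \<le> s"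
    and fin: "pos_moment M (\<lambda>x. Y x - C) s < \<infinity>"
  shows "pos_moment M Y s < \<infinity>"
proof -
  have "pos_moment M Y s
          \<le> (\<integral>\<^sup>+x. ennreal ((2 * C) powr s) + ennreal (2 powr s) * ennreal (max 0 (Y x - C) powr s) \<partial>M)"
    unfolding pos_moment_def
  proof (intro nn_integral_mono)
    fix x
    have "ennreal (max 0 (Y x) powr s)
            \<le> ennreal ((2 * C) powr s + 2 powr s * max 0 (Y x - C) powr s)"
      using pos_part_powr_shift_le[OF C s] by (rule ennreal_leI)
    then show "ennreal (max 0 (Y x) powr s)
            \<le> ennreal ((2 * C) powr s) + ennreal (2 powr s) * ennreal (max 0 (Y x - C) powr s)"
      by (simp add: ennreal_mult)
  qed
  also have "\<dots> = ennreal ((2 * C) powr s) + ennreal (2 powr s) * pos_moment M (\<lambda>x. Y x - C) s"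
    by (subst nn_integral_add) (auto simp: nn_integral_cmult emeasure_space_1 pos_moment_def)
  also have "\<dots> < \<infinity>" using fin by (simp add: ennreal_mult_less_top)
  finally show ?thesis .
qed

lemma moment_index_mono:
  assumes "\<And>s. 0 \<le> s \<Longrightarrow> pos_moment M A s < \<infinity> \<Longrightarrow> pos_moment M' B s < \<infinity>"
  shows "moment_index M A \<le> moment_index M' B"
  unfolding moment_index_pos_moment using assms by (intro Sup_subset_mono) auto

lemma (in prob_space) moment_index_le_from_below:
  assumes "\<And>s. 0 \<le> s \<Longrightarrow> ereal s < moment_index M' A \<Longrightarrow> pos_moment M B s < \<infinity>"
  shows "moment_index M' A \<le> moment_index M B"
proof (rule dense_le)
  fix y assume y: "y < moment_index M' A"
  show "y \<le> moment_index M B"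
  proof (cases "y < 0")
    case True
    then show ?thesis using moment_index_nonneg[of B] by simp
  next
    case False
    with y obtain r where r: "y = ereal r" "0 \<le> r"
      by (cases y) (auto simp: zero_ereal_def)
    then show ?thesis using assms[of r] y by (simp add: ereal_le_moment_index)
  qed
qed

lemma (in prob_space) countable_cover_positive:
  fixes A :: "nat \<Rightarrow> 'a set"
  assumes "\<And>i. A i \<in> sets M" and "space M \<subseteq> (\<Union>i. A i)"
  shows "\<exists>i. emeasure M (A i) \<noteq> 0"
proof (rule ccontr)
  assume "\<not> ?thesis"
  then have "emeasure M (\<Union>i. A i) = 0" using assms(1) by (intro emeasure_UN_eq_0) auto
  moreover have "emeasure M (space M) \<le> emeasure M (\<Union>i. A i)"
    using assms by (intro emeasure_mono) auto
  ultimately show False by (simp add: emeasure_space_1)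
qed

section \<open>Random sums of identically distributed variables\<close>

locale random_sum = prob_space M for M :: "'a measure" +
  fixes X :: "'a \<Rightarrow> real" and Xs :: "nat \<Rightarrow> 'a \<Rightarrow> real" and N :: "'a \<Rightarrow> nat"
  assumes X_measurable[measurable]: "X \<in> borel_measurable M"
    and N_measurable[measurable]: "N \<in> measurable M (count_space UNIV)"
    and N_ge_1: "\<And>x. x \<in> space M \<Longrightarrow> N x \<ge> 1"
    and Xs_measurable: "\<And>i. i \<ge> 1 \<Longrightarrow> Xs i \<in> borel_measurable M"
    and Xs_distr: "\<And>i. i \<ge> 1 \<Longrightarrow> distr M borel (Xs i) = distr M borel X"
    and indep: "indep_vars (\<lambda>_. borel)
           (\<lambda>j x. case j of None \<Rightarrow> real (N x) | Some i \<Rightarrow> Xs i x)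
           (insert None (Some ` {1..}))"
begin

definition S :: "'a \<Rightarrow> real" where
  "S = (\<lambda>x. \<Sum>k=1..N x. Xs k x)"

text \<open>Sums of \<open>N\<close> transformed summands are measurable, since \<open>N\<close> takes countably many values.\<close>
lemma random_sum_measurable[measurable]:
  fixes g :: "real \<Rightarrow> 'b::{second_countable_topology, topological_comm_monoid_add}"
  assumes [measurable]: "g \<in> borel_measurable borel"
  shows "(\<lambda>\<omega>. \<Sum>k=1..N \<omega>. g (Xs k \<omega>)) \<in> borel_measurable M"
proof (rule measurable_compose_countable'[where I=UNIV and g=N])
  show "(\<lambda>\<omega>. \<Sum>k=1..n. g (Xs k \<omega>)) \<in> borel_measurable M" for n
    by (intro borel_measurable_sum) (auto intro: measurable_compose[OF Xs_measurable])
qed (auto simp: N_measurable)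

lemma S_measurable[measurable]: "S \<in> borel_measurable M"
  using random_sum_measurable[of "\<lambda>x. x"] by (simp add: S_def)

lemma nn_integral_indep_prod:
  fixes F :: "real \<Rightarrow> ennreal" and G :: "nat \<Rightarrow> real \<Rightarrow> ennreal"
  assumes K: "finite K" "K \<subseteq> {1..}" and F[measurable]: "F \<in> borel_measurable borel"
    and G: "\<And>k. k \<in> K \<Longrightarrow> G k \<in> borel_measurable borel"
  shows "(\<integral>\<^sup>+\<omega>. F (real (N \<omega>)) * (\<Prod>k\<in>K. G k (Xs k \<omega>)) \<partial>M)
       = (\<integral>\<^sup>+\<omega>. F (real (N \<omega>)) \<partial>M) * (\<Prod>k\<in>K. \<integral>\<^sup>+\<omega>. G k (Xs k \<omega>) \<partial>M)"
proof -
  define Z where "Z = (\<lambda>j x. case j of None \<Rightarrow> real (N x) | Some i \<Rightarrow> Xs i x)"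
  define W where "W = (\<lambda>j. case j of None \<Rightarrow> F | Some k \<Rightarrow> G k)"
  define I where "I = insert None (Some ` K)"
  have "indep_vars (\<lambda>_. borel) Z I"
    unfolding Z_def I_def by (rule indep_vars_subset[OF indep]) (use K in auto)
  then have "indep_vars (\<lambda>_. borel) (\<lambda>j \<omega>. W j (Z j \<omega>)) I"
    by (rule indep_vars_compose2) (auto simp: W_def I_def G)
  then have "(\<integral>\<^sup>+\<omega>. (\<Prod>j\<in>I. W j (Z j \<omega>)) \<partial>M) = (\<Prod>j\<in>I. \<integral>\<^sup>+\<omega>. W j (Z j \<omega>) \<partial>M)"
    using K by (intro indep_vars_nn_integral) (auto simp: I_def)
  then show ?thesis
    using K by (simp add: I_def prod.reindex W_def Z_def)
qed

lemma nn_integral_Xs: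
  assumes k: "k \<ge> 1" and g[measurable]: "g \<in> borel_measurable borel"
  shows "(\<integral>\<^sup>+\<omega>. g (Xs k \<omega>) \<partial>M) = (\<integral>\<^sup>+\<omega>. g (X \<omega>) \<partial>M)"
proof -
  have [measurable]: "Xs k \<in> borel_measurable M" using Xs_measurable k .
  have "(\<integral>\<^sup>+\<omega>. g (Xs k \<omega>) \<partial>M) = integral\<^sup>N (distr M borel (Xs k)) g"
    by (simp add: nn_integral_distr)
  also have "\<dots> = (\<integral>\<^sup>+\<omega>. g (X \<omega>) \<partial>M)" using Xs_distr[OF k] by (simp add: nn_integral_distr)
  finally show ?thesis .
qed

text \<open>Wald-type identity \<open>E(h(N) \<Sum>\<^sub>k\<^sub>\<le>\<^sub>N g(X_k)) = E(h(N) N) E(g(X))\<close>: write the random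
  sum as the series \<open>\<Sum>\<^sub>k h(N) [k+1 \<le> N] g(X_{k+1})\<close> and factor each term.\<close>
lemma nn_integral_random_sum:
  fixes h g :: "real \<Rightarrow> ennreal"
  assumes [measurable]: "h \<in> borel_measurable borel" "g \<in> borel_measurable borel"
  shows "(\<integral>\<^sup>+\<omega>. h (real (N \<omega>)) * (\<Sum>k=1..N \<omega>. g (Xs k \<omega>)) \<partial>M)
       = (\<integral>\<^sup>+\<omega>. h (real (N \<omega>)) * of_nat (N \<omega>) \<partial>M) * (\<integral>\<^sup>+\<omega>. g (X \<omega>) \<partial>M)"
proof -
  define F :: "nat \<Rightarrow> real \<Rightarrow> ennreal"
    where "F k r = h r * indicator {real (Suc k)..} r" for k r
  have [measurable]: "F k \<in> borel_measurable borel" for k unfolding F_def by measurable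
  have [measurable]: "Xs (Suc k) \<in> borel_measurable M" for k using Xs_measurable by simp
  have series: "h (real n) * (\<Sum>k=1..n. y k) = (\<Sum>k. F k (real n) * y (Suc k))"
    for n and y :: "nat \<Rightarrow> ennreal"
  proof -
    have "(\<Sum>k. F k (real n) * y (Suc k)) = (\<Sum>k<n. F k (real n) * y (Suc k))"
      by (rule suminf_finite) (auto simp: F_def)
    also have "\<dots> = h (real n) * (\<Sum>k<n. y (Suc k))"
      by (auto simp: F_def sum_distrib_left intro!: sum.cong)
    finally show ?thesis by (simp add: sum.atLeast1_atMost_eq)
  qed
  have count: "h (real n) * of_nat n = (\<Sum>k. F k (real n))" for n
    using series[of n "\<lambda>_. 1"] by simp
  have factor_term: "(\<integral>\<^sup>+\<omega>. F k (real (N \<omega>)) * g (Xs (Suc k) \<omega>) \<partial>M)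
                = (\<integral>\<^sup>+\<omega>. F k (real (N \<omega>)) \<partial>M) * (\<integral>\<^sup>+\<omega>. g (X \<omega>) \<partial>M)" for k
    using nn_integral_indep_prod[of "{Suc k}" "F k" "\<lambda>_. g"] nn_integral_Xs[of "Suc k" g] by simp
  have "(\<integral>\<^sup>+\<omega>. h (real (N \<omega>)) * (\<Sum>k=1..N \<omega>. g (Xs k \<omega>)) \<partial>M)
          = (\<Sum>k. \<integral>\<^sup>+\<omega>. F k (real (N \<omega>)) * g (Xs (Suc k) \<omega>) \<partial>M)"
    unfolding series by (rule nn_integral_suminf) simp
  also have "\<dots> = (\<Sum>k. \<integral>\<^sup>+\<omega>. F k (real (N \<omega>)) \<partial>M) * (\<integral>\<^sup>+\<omega>. g (X \<omega>) \<partial>M)"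
    unfolding factor_term by simp
  also have "(\<Sum>k. \<integral>\<^sup>+\<omega>. F k (real (N \<omega>)) \<partial>M) = (\<integral>\<^sup>+\<omega>. h (real (N \<omega>)) * of_nat (N \<omega>) \<partial>M)"
    unfolding count by (rule nn_integral_suminf[symmetric]) simp
  finally show ?thesis .
qed

lemma nn_integral_event_factor:
  fixes g :: "real \<Rightarrow> ennreal" and c :: real
  assumes n: "n \<ge> 1" and g[measurable]: "g \<in> borel_measurable borel"
  shows "(\<integral>\<^sup>+\<omega>. indicator {real n} (real (N \<omega>))
              * (g (Xs 1 \<omega>) * (\<Prod>k\<in>{2..n}. indicator {- c..} (Xs k \<omega>))) \<partial>M)
       = emeasure M {x\<in>space M. N x = n}
           * ((\<integral>\<^sup>+\<omega>. g (X \<omega>) \<partial>M) * emeasure M {x\<in>space M. - c \<le> X x} ^ (n - 1))"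
proof -
  define G :: "nat \<Rightarrow> real \<Rightarrow> ennreal" where "G k = (if k = 1 then g else indicator {- c..})" for k
  have split: "{1..n} = insert 1 {2..n}" using n by auto
  have prod_G: "g (Xs 1 \<omega>) * (\<Prod>k\<in>{2..n}. indicator {- c..} (Xs k \<omega>)) = (\<Prod>k\<in>{1..n}. G k (Xs k \<omega>))"
    for \<omega> unfolding split by (simp add: G_def)
  have "(\<integral>\<^sup>+\<omega>. indicator {real n} (real (N \<omega>)) \<partial>M)
          = (\<integral>\<^sup>+\<omega>. indicator {x\<in>space M. N x = n} \<omega> \<partial>M)"
    by (intro nn_integral_cong) (auto simp: indicator_def)
  then have N_event: "(\<integral>\<^sup>+\<omega>. indicator {real n} (real (N \<omega>)) \<partial>M) = emeasure M {x\<in>space M. N x = n}"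
    by simp
  have X_event: "(\<integral>\<^sup>+\<omega>. G k (Xs k \<omega>) \<partial>M) = emeasure M {x\<in>space M. - c \<le> X x}"
    if "k \<in> {2..n}" for k
  proof -
    have "(\<integral>\<^sup>+\<omega>. G k (Xs k \<omega>) \<partial>M) = (\<integral>\<^sup>+\<omega>. indicator {- c..} (X \<omega>) \<partial>M)"
      using that by (simp add: G_def nn_integral_Xs)
    also have "\<dots> = (\<integral>\<^sup>+\<omega>. indicator {x\<in>space M. - c \<le> X x} \<omega> \<partial>M)"
      by (intro nn_integral_cong) (auto simp: indicator_def)
    finally show ?thesis by simp
  qed
  have "(\<Prod>k\<in>{1..n}. \<integral>\<^sup>+\<omega>. G k (Xs k \<omega>) \<partial>M)
          = (\<integral>\<^sup>+\<omega>. G 1 (Xs 1 \<omega>) \<partial>M) * (\<Prod>k\<in>{2..n}. \<integral>\<^sup>+\<omega>. G k (Xs k \<omega>) \<partial>M)"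
    unfolding split by simp
  also have "\<dots> = (\<integral>\<^sup>+\<omega>. g (X \<omega>) \<partial>M) * emeasure M {x\<in>space M. - c \<le> X x} ^ (n - 1)"
    using X_event by (simp add: G_def nn_integral_Xs)
  finally show ?thesis
    unfolding prod_G N_event[symmetric] by (subst nn_integral_indep_prod) (auto simp: G_def)
qed

text \<open>Upper bound, one exponent at a time: a finite moment of \<open>S\<close> yields a finite moment of
  some downward shift of \<open>X\<close>, by restricting \<open>S\<close> to an event of positive probability on
  which \<open>S \<ge> X_1 - C\<close>.\<close>
lemma shifted_pos_moment_finite:
  assumes s: "0 \<le> s" and fin: "pos_moment M S s < \<infinity>"
  shows "\<exists>C\<ge>0. pos_moment M (\<lambda>x. X x - C) s < \<infinity>"
proof -
  have "space M \<subseteq> (\<Union>n. {x\<in>space M. N x = n})" by blast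
  then have "\<exists>n. emeasure M {x\<in>space M. N x = n} \<noteq> 0"
    by (rule countable_cover_positive[rotated]) measurable
  then obtain n where n: "emeasure M {x\<in>space M. N x = n} \<noteq> 0" ..
  have n1: "n \<ge> 1" using n N_ge_1 by (metis (mono_tags, lifting) Collect_empty_eq emeasure_empty)
  have "\<exists>c::nat. - real c \<le> X x" for x
    using real_arch_simple[of "- X x"] by (metis minus_le_iff)
  then have "space M \<subseteq> (\<Union>c::nat. {x\<in>space M. - real c \<le> X x})" by blast
  then have "\<exists>c::nat. emeasure M {x\<in>space M. - real c \<le> X x} \<noteq> 0"
    by (rule countable_cover_positive[rotated]) measurable
  then obtain c :: nat where c: "emeasure M {x\<in>space M. - real c \<le> X x} \<noteq> 0" ..
  define C where "C = real n * real c"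
  define g where "g x = ennreal (max 0 (x - C) powr s)" for x
  have g_measurable[measurable]: "g \<in> borel_measurable borel" unfolding g_def by measurable
  have restrict: "indicator {real n} (real (N \<omega>))
                    * (g (Xs 1 \<omega>) * (\<Prod>k\<in>{2..n}. indicator {- real c..} (Xs k \<omega>)))
                  \<le> ennreal (max 0 (S \<omega>) powr s)" for \<omega>
  proof (cases "N \<omega> = n \<and> (\<forall>k\<in>{2..n}. - real c \<le> Xs k \<omega>)")
    case True
    then have Nn: "N \<omega> = n" and lb: "\<forall>k\<in>{2..n}. - real c \<le> Xs k \<omega>" by auto
    have "Xs 1 \<omega> - C \<le> S \<omega>"
      unfolding C_def S_def Nn using n1 lb by (intro sum_ge_first_minus) auto
    moreover have "(\<Prod>k\<in>{2..n}. indicator {- real c..} (Xs k \<omega>)) = (1::ennreal)"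
      using lb by (intro prod.neutral) auto
    ultimately show ?thesis using Nn s
      unfolding g_def by (auto intro!: ennreal_leI powr_mono2)
  next
    case False
    show ?thesis
    proof (cases "N \<omega> = n")
      case True
      with False obtain k where "k \<in> {2..n}" "Xs k \<omega> < - real c" by (auto simp: not_le)
      then have "(\<Prod>k\<in>{2..n}. indicator {- real c..} (Xs k \<omega>)) = (0::ennreal)"
        by (intro prod_zero bexI[of _ k]) auto
      then show ?thesis by (metis mult_zero_right zero_le)
    qed simp
  qed
  have "emeasure M {x\<in>space M. N x = n}
          * ((\<integral>\<^sup>+\<omega>. g (X \<omega>) \<partial>M) * emeasure M {x\<in>space M. - real c \<le> X x} ^ (n - 1))
        \<le> pos_moment M S s"
    unfolding nn_integral_event_factor[OF n1 g_measurable, symmetric] pos_moment_def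
    using restrict by (intro nn_integral_mono)
  then have "emeasure M {x\<in>space M. N x = n}
          * ((\<integral>\<^sup>+\<omega>. g (X \<omega>) \<partial>M) * emeasure M {x\<in>space M. - real c \<le> X x} ^ (n - 1)) < \<infinity>"
    using fin by (rule order_le_less_trans)
  then have "(\<integral>\<^sup>+\<omega>. g (X \<omega>) \<partial>M) * emeasure M {x\<in>space M. - real c \<le> X x} ^ (n - 1) < \<infinity>"
    using n by (auto simp: ennreal_mult_less_top)
  then have "(\<integral>\<^sup>+\<omega>. g (X \<omega>) \<partial>M) < \<infinity>"
    using c by (auto simp: ennreal_mult_less_top)
  then show ?thesis by (intro exI[of _ C]) (auto simp: C_def g_def pos_moment_def)
qed

text \<open>Lower bound, one exponent at a time: below the moment indices of both \<open>X\<close> and \<open>N\<close>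
  the moment of \<open>S\<close> is finite, by the convexity bound and the Wald-type identity.\<close>
lemma pos_moment_S_finite:
  assumes X_integrable: "integrable M X" and s: "0 \<le> s"
    and fX: "ereal s < moment_index M X" and fN: "ereal s < moment_index M (\<lambda>x. real (N x))"
  shows "pos_moment M S s < \<infinity>"
proof -
  define t where "t = max s 1"
  define h where "h r = ennreal (r powr (s - 1))" for r
  define g where "g x = ennreal (max 0 x powr t)" for x
  have [measurable]: "h \<in> borel_measurable borel" "g \<in> borel_measurable borel"
    unfolding h_def g_def by measurable
  define EN where "EN = (\<integral>\<^sup>+\<omega>. ennreal (real (N \<omega>) powr s) \<partial>M)"
  have finN: "EN < \<infinity>"
    using pos_moment_finite_below[OF _ s fN] by (simp add: EN_def pos_moment_def)
  have finX: "(\<integral>\<^sup>+\<omega>. g (X \<omega>) \<partial>M) < \<infinity>"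
    using pos_moment_finite_max_one[OF X_measurable X_integrable s fX]
    by (simp add: g_def t_def pos_moment_def)
  have pointwise: "ennreal (max 0 (S \<omega>) powr s)
      \<le> ennreal (2 powr t) * (ennreal (real (N \<omega>) powr s) + h (real (N \<omega>)) * (\<Sum>k=1..N \<omega>. g (Xs k \<omega>)))"
    if "\<omega> \<in> space M" for \<omega>
  proof -
    have "max 0 (S \<omega>) powr s \<le> 2 powr t * (real (N \<omega>) powr s
            + real (N \<omega>) powr (s - 1) * (\<Sum>k=1..N \<omega>. max 0 (Xs k \<omega>) powr t))"
      unfolding S_def using N_ge_1[OF that] s by (intro pos_part_sum_powr_le) (auto simp: t_def)
    then have "ennreal (max 0 (S \<omega>) powr s) \<le> ennreal (2 powr t * (real (N \<omega>) powr s
            + real (N \<omega>) powr (s - 1) * (\<Sum>k=1..N \<omega>. max 0 (Xs k \<omega>) powr t)))"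
      by (rule ennreal_leI)
    also have "\<dots> = ennreal (2 powr t) * (ennreal (real (N \<omega>) powr s) + ennreal (real (N \<omega>) powr (s - 1))
                      * ennreal (\<Sum>k=1..N \<omega>. max 0 (Xs k \<omega>) powr t))"
      by (simp add: ennreal_mult sum_nonneg)
    finally show ?thesis by (simp add: h_def g_def)
  qed
  have N_powr: "h (real (N \<omega>)) * of_nat (N \<omega>) = ennreal (real (N \<omega>) powr s)"
    if "\<omega> \<in> space M" for \<omega>
    using N_ge_1[OF that] by (simp add: h_def ennreal_of_nat_eq_real_of_nat ennreal_mult[symmetric] powr_diff)
  have "pos_moment M S s
      \<le> (\<integral>\<^sup>+\<omega>. ennreal (2 powr t) * (ennreal (real (N \<omega>) powr s) + h (real (N \<omega>)) * (\<Sum>k=1..N \<omega>. g (Xs k \<omega>))) \<partial>M)"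
    unfolding pos_moment_def using pointwise by (intro nn_integral_mono) auto
  also have "\<dots> = ennreal (2 powr t) * (\<integral>\<^sup>+\<omega>. ennreal (real (N \<omega>) powr s)
                    + h (real (N \<omega>)) * (\<Sum>k=1..N \<omega>. g (Xs k \<omega>)) \<partial>M)"
    by (rule nn_integral_cmult) measurable
  also have "(\<integral>\<^sup>+\<omega>. ennreal (real (N \<omega>) powr s) + h (real (N \<omega>)) * (\<Sum>k=1..N \<omega>. g (Xs k \<omega>)) \<partial>M)
               = EN + (\<integral>\<^sup>+\<omega>. h (real (N \<omega>)) * (\<Sum>k=1..N \<omega>. g (Xs k \<omega>)) \<partial>M)"
    unfolding EN_def by (rule nn_integral_add) measurable
  also have "(\<integral>\<^sup>+\<omega>. h (real (N \<omega>)) * (\<Sum>k=1..N \<omega>. g (Xs k \<omega>)) \<partial>M)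
               = (\<integral>\<^sup>+\<omega>. h (real (N \<omega>)) * of_nat (N \<omega>) \<partial>M) * (\<integral>\<^sup>+\<omega>. g (X \<omega>) \<partial>M)"
    by (rule nn_integral_random_sum) measurable
  also have "(\<integral>\<^sup>+\<omega>. h (real (N \<omega>)) * of_nat (N \<omega>) \<partial>M) = EN"
    unfolding EN_def by (intro nn_integral_cong N_powr)
  also have "ennreal (2 powr t) * (EN + EN * (\<integral>\<^sup>+\<omega>. g (X \<omega>) \<partial>M)) < \<infinity>"
    using finN finX by (simp add: ennreal_mult_less_top)
  finally show ?thesis .
qed

end

theorem corollary2p3:
  fixes M :: "'a measure" and X :: "'a \<Rightarrow> real" and Xs :: "nat \<Rightarrow> 'a \<Rightarrow> real"
    and N :: "'a \<Rightarrow> nat"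
  assumes "prob_space M"
    and "X \<in> borel_measurable M"
    and "integrable M X"
    and "N \<in> measurable M (count_space UNIV)"
    and "\<And>x. x \<in> space M \<Longrightarrow> N x \<ge> 1"
    and "\<And>i. i \<ge> 1 \<Longrightarrow> Xs i \<in> borel_measurable M"
    and "\<And>i. i \<ge> 1 \<Longrightarrow> distr M borel (Xs i) = distr M borel X"
    and "prob_space.indep_vars M (\<lambda>_. borel)
           (\<lambda>j x. case j of None \<Rightarrow> real (N x) | Some i \<Rightarrow> Xs i x)
           (insert None (Some ` {1..}))"
    and "moment_index M X \<le> moment_index M (\<lambda>x. real (N x))"
  shows "moment_index M (\<lambda>x. \<Sum>k=1..N x. Xs k x) = moment_index M X"
proof -
  interpret random_sum M X Xs N
    using assms by (simp add: random_sum_def random_sum_axioms_def)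
  have "moment_index M S \<le> moment_index M X"
  proof (rule moment_index_mono)
    fix s :: real assume "0 \<le> s" "pos_moment M S s < \<infinity>"
    then obtain C where "0 \<le> C" "pos_moment M (\<lambda>x. X x - C) s < \<infinity>"
      using shifted_pos_moment_finite by blast
    then show "pos_moment M X s < \<infinity>"
      using pos_moment_finite_shift[OF X_measurable] \<open>0 \<le> s\<close> by blast
  qed
  moreover have "moment_index M X \<le> moment_index M S"
  proof (rule moment_index_le_from_below)
    fix s :: real assume "0 \<le> s" "ereal s < moment_index M X"
    moreover from this(2) have "ereal s < moment_index M (\<lambda>x. real (N x))"
      using assms(9) by (rule less_le_trans)
    ultimately show "pos_moment M S s < \<infinity>" using assms(3) by (intro pos_moment_S_finite)
  qed
  ultimately show ?thesis by (simp add: S_def)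
qed

end
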